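(* Let $d\ge1$, $\sigma>0$, and let $(P_t)_{t\ge0}$ be the heat semigroup generated by $(Lf)(p,\xi)=\sum_{j=1}^d p_j\,\partial_{\xi_j}f(p,\xi)+\frac{\sigma^2}{2}\Delta_p f(p,\xi)$ on $\mathbb{R}^d\times\mathbb{R}^d$. Let $f\in C^1(\mathbb{R}^d\times\mathbb{R}^d)$ be non-negative and bounded. Then for every $t>0$, \[\sum_{i=1}^d\left[\Big(\frac{\partial \ln P_tf}{\partial p_i}-\frac{t}{2}\frac{\partial \ln P_tf}{\partial \xi_i}\Big)^2+\frac{t^2}{12}\Big(\frac{\partial \ln P_tf}{\partial\xi_i}\Big)^2\right]\le\frac{2}{\sigma^2t\,P_tf}\big(P_t(f\ln f)-P_tf\ln P_tf\big).\]
   Context: $P_tf(p,\xi)=\mathbb{E}\,f\big(p+B_t,\xi+tp+\int_0^tB_sds\big)$, where $B$ is a Brownian motion in $\mathbb{R}^d$ with variance $\sigma^2$ started at $0$. $\Delta_p$ is the Laplacian in the variable $p$. *)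

theory Defs
  imports "HOL-Analysis.Analysis"
begin

text \<open>P_t f(p,xi) = E f(p + B_t, xi + t p + int_0^t B_s ds), B a d-dimensional Brownian motion
  with variance sigma^2 started at 0.  For each coordinate j the pair (B_t^j, int_0^t B_s^j ds)
  is a centred Gaussian vector with covariance matrix
  [[sigma^2 t, sigma^2 t^2/2], [sigma^2 t^2/2, sigma^2 t^3/3]], and the coordinates are
  independent.\<close>

definition kolm_var_b :: "real \<Rightarrow> real \<Rightarrow> real" where
  "kolm_var_b \<sigma> t = \<sigma>\<^sup>2 * t"

definition kolm_cov :: "real \<Rightarrow> real \<Rightarrow> real" where
  "kolm_cov \<sigma> t = \<sigma>\<^sup>2 * t\<^sup>2 / 2"

definition kolm_var_c :: "real \<Rightarrow> real \<Rightarrow> real" where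
  "kolm_var_c \<sigma> t = \<sigma>\<^sup>2 * t ^ 3 / 3"

definition kolm_det :: "real \<Rightarrow> real \<Rightarrow> real" where
  "kolm_det \<sigma> t = kolm_var_b \<sigma> t * kolm_var_c \<sigma> t - (kolm_cov \<sigma> t)\<^sup>2"

definition kolm_density2 :: "real \<Rightarrow> real \<Rightarrow> real \<Rightarrow> real \<Rightarrow> real" where
  "kolm_density2 \<sigma> t b c =
     exp (- (kolm_var_c \<sigma> t * b\<^sup>2 - 2 * kolm_cov \<sigma> t * b * c + kolm_var_b \<sigma> t * c\<^sup>2)
            / (2 * kolm_det \<sigma> t))
     / (2 * pi * sqrt (kolm_det \<sigma> t))"

definition kolm_density :: "real \<Rightarrow> real \<Rightarrow> real^'d::finite \<Rightarrow> real^'d \<Rightarrow> real" where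
  "kolm_density \<sigma> t b c = (\<Prod>j\<in>UNIV. kolm_density2 \<sigma> t (b $ j) (c $ j))"

definition kolm_sg :: "real \<Rightarrow> real \<Rightarrow> ((real^'d::finite) \<times> (real^'d) \<Rightarrow> real)
                        \<Rightarrow> (real^'d) \<times> (real^'d) \<Rightarrow> real" where
  "kolm_sg \<sigma> t f x =
     (\<integral>b. (\<integral>c. kolm_density \<sigma> t b c * f (fst x + b, snd x + t *\<^sub>R fst x + c) \<partial>lborel) \<partial>lborel)"

end

theory Submission
  imports Defs "HOL-Probability.Distributions"
begin

text \<open>Write \<open>Y = (B\<^sub>t, \<integral>\<^sub>0\<^sup>t B\<^sub>s ds)\<close>, a centred Gaussian vector with covariance \<open>\<Sigma>\<close>, and
  \<open>\<Phi> (p, \<xi>) = (p, \<xi> + t p)\<close>, so that \<open>P\<^sub>t f x = E f (\<Phi> x + Y)\<close>. Moving \<open>x\<close> in a direction \<open>v\<close>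
  translates \<open>Y\<close> by \<open>w = \<Phi> v\<close>, which by the Cameron-Martin formula multiplies the density of \<open>Y\<close> by
  \<open>exp (\<langle>Y, \<Sigma>\<inverse> w\<rangle> - \<langle>w, \<Sigma>\<inverse> w\<rangle> / 2)\<close>. Hence the derivative of \<open>ln P\<^sub>t f\<close> along \<open>v\<close> is
  \<open>E [F \<langle>Y, \<Sigma>\<inverse> w\<rangle>] / E F\<close> with \<open>F = f (\<Phi> x + Y)\<close>. The entropy duality
  \<open>E [F Z] \<le> Ent F + E F \<cdot> ln E (exp Z)\<close>, together with \<open>E exp \<langle>Y, \<Sigma>\<inverse> w\<rangle> = exp (\<langle>w, \<Sigma>\<inverse> w\<rangle> / 2)\<close>,
  bounds it by \<open>Ent F / E F + \<langle>w, \<Sigma>\<inverse> w\<rangle> / 2\<close>. Optimising over \<open>v\<close> (a Legendre transform of this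
  quadratic form, whose determinant \<open>det \<Sigma> = \<sigma>\<^sup>4 t\<^sup>4 / 12\<close> produces the factor \<open>t\<^sup>2 / 12\<close>) gives the
  inequality.\<close>

section \<open>Elementary inequalities\<close>

lemma abs_exp_minus_one_le:
  fixes x :: real
  shows "\<bar>exp x - 1\<bar> \<le> \<bar>x\<bar> * exp \<bar>x\<bar>"
proof (cases "x \<ge> 0")
  case True
  have "exp x * (1 - x) \<le> exp x * exp (- x)"
    using exp_ge_add_one_self[of "- x"] by (intro mult_left_mono) auto
  then show ?thesis
    using True by (simp add: exp_minus field_simps)
next
  case False
  have "\<bar>exp x - 1\<bar> = 1 - exp x" and "\<bar>x\<bar> = - x"
    using False by auto
  then have "\<bar>exp x - 1\<bar> \<le> \<bar>x\<bar>"
    using exp_ge_add_one_self[of x] by linarith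
  also have "\<dots> \<le> \<bar>x\<bar> * exp \<bar>x\<bar>"
    by (simp add: mult_le_cancel_left1)
  finally show ?thesis .
qed

lemma abs_le_exp_plus_exp_uminus:
  fixes z :: real
  shows "\<bar>z\<bar> \<le> exp z + exp (- z)"
proof -
  have "\<bar>z\<bar> \<le> exp \<bar>z\<bar>"
    using exp_ge_add_one_self[of "\<bar>z\<bar>"] by linarith
  also have "\<dots> \<le> exp z + exp (- z)"
    by (cases "z \<ge> 0") auto
  finally show ?thesis .
qed

lemma abs_mult_ln_le:
  fixes x :: real
  assumes "0 \<le> x"
  shows "\<bar>x * ln x\<bar> \<le> x\<^sup>2 + 1"
proof (cases "x = 0")
  case False
  then have x: "0 < x"
    using assms by simp
  have "x * ln x \<le> x * (x - 1)"
    using x ln_le_minus_one[OF x] by (intro mult_left_mono) auto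
  moreover have "x * (- ln x) \<le> x * (1 / x - 1)"
    using x ln_le_minus_one[of "1 / x"] by (intro mult_left_mono) (auto simp: ln_div)
  moreover have "x * (x - 1) \<le> x\<^sup>2 + 1" and "x * (1 / x - 1) \<le> x\<^sup>2 + 1"
    using x by (simp_all add: power2_eq_square algebra_simps)
  ultimately show ?thesis
    by (simp only: abs_le_iff) linarith
qed simp

text \<open>The Fenchel-Young inequality for the conjugate pair \<open>a ln a - a\<close> and \<open>exp\<close>.\<close>
lemma mult_le_entropy_plus_exp:
  fixes a z :: real
  assumes "0 \<le> a"
  shows "a * z \<le> a * ln a - a + exp z"
proof (cases "a = 0")
  case False
  then have a: "0 < a"
    using assms by simp
  have "a * (1 + (z - ln a)) \<le> a * exp (z - ln a)"
    using a exp_ge_add_one_self[of "z - ln a"] by (intro mult_left_mono) auto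
  also have "\<dots> = exp z"
    using a by (simp add: exp_diff)
  finally show ?thesis
    by (simp add: algebra_simps)
qed simp

lemma abs_exp_tilt_quotient_le:
  fixes s l Q :: real
  assumes "s \<noteq> 0" and "\<bar>s\<bar> \<le> 1"
  shows "\<bar>(exp (s * l - s\<^sup>2 * Q) - 1) / s\<bar> \<le> exp (2 * \<bar>Q\<bar>) * (exp (2 * l) + exp (- 2 * l))"
proof -
  define a where "a = \<bar>l\<bar> + \<bar>Q\<bar>"
  have "\<bar>s\<bar> * \<bar>s\<bar> \<le> \<bar>s\<bar> * 1"
    using assms(2) by (intro mult_left_mono) auto
  then have "\<bar>s\<^sup>2 * Q\<bar> \<le> \<bar>s\<bar> * \<bar>Q\<bar>"
    by (simp add: abs_mult power2_eq_square mult_right_mono)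
  then have small: "\<bar>s * l - s\<^sup>2 * Q\<bar> \<le> \<bar>s\<bar> * a"
    unfolding a_def by (simp add: abs_mult distrib_left abs_triangle_ineq4 order_trans[OF abs_triangle_ineq4])
  then have "\<bar>s * l - s\<^sup>2 * Q\<bar> \<le> a"
    using assms(2) mult_left_le_one_le[of a "\<bar>s\<bar>"] unfolding a_def by simp
  then have "\<bar>exp (s * l - s\<^sup>2 * Q) - 1\<bar> \<le> (\<bar>s\<bar> * a) * exp a"
    using small abs_exp_minus_one_le[of "s * l - s\<^sup>2 * Q"] by (meson abs_ge_zero exp_ge_zero exp_le_cancel_iff mult_mono order_trans)
  then have "\<bar>(exp (s * l - s\<^sup>2 * Q) - 1) / s\<bar> \<le> a * exp a"
    using assms(1) by (simp add: abs_divide divide_le_eq mult_ac)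
  also have "\<dots> \<le> exp a * exp a"
  proof (rule mult_right_mono)
    show "a \<le> exp a"
      using exp_ge_add_one_self[of a] by linarith
  qed simp
  also have "\<dots> = exp (2 * \<bar>Q\<bar>) * exp (2 * \<bar>l\<bar>)"
    unfolding a_def by (simp add: exp_add[symmetric])
  also have "\<dots> \<le> exp (2 * \<bar>Q\<bar>) * (exp (2 * l) + exp (- 2 * l))"
    by (intro mult_left_mono) (cases "l \<ge> 0", auto)
  finally show ?thesis .
qed

lemma integrable_mult_bounded:
  fixes h g :: "'a \<Rightarrow> real"
  assumes h: "integrable M h" and [measurable]: "g \<in> borel_measurable M" and g: "\<And>y. \<bar>g y\<bar> \<le> B"
  shows "integrable M (\<lambda>y. h y * g y)"
proof (rule Bochner_Integration.integrable_bound[of _ "\<lambda>y. B * h y"])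
  show "integrable M (\<lambda>y. B * h y)"
    using h by simp
  show "(\<lambda>y. h y * g y) \<in> borel_measurable M"
    using borel_measurable_integrable[OF h] by measurable
  have "0 \<le> B"
    using g[of undefined] by linarith
  moreover have "\<bar>g y\<bar> * \<bar>h y\<bar> \<le> B * \<bar>h y\<bar>" for y
    using g by (intro mult_right_mono) auto
  ultimately show "AE y in M. norm (h y * g y) \<le> norm (B * h y)"
    by (intro AE_I2) (simp add: abs_mult mult.commute)
qed

lemma integrable_mult_by_exp_moments:
  fixes K g Z :: "'a \<Rightarrow> real"
  assumes "\<And>y. 0 \<le> K y" and [measurable]: "g \<in> borel_measurable M" "Z \<in> borel_measurable M"
    and g: "\<And>y. \<bar>g y\<bar> \<le> B"
    and "integrable M (\<lambda>y. K y * exp (Z y))" and "integrable M (\<lambda>y. K y * exp (- Z y))"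
  shows "integrable M (\<lambda>y. K y * g y * Z y)"
proof -
  have "integrable M (\<lambda>y. (K y * exp (Z y) + K y * exp (- Z y)) * (g y * Z y / (exp (Z y) + exp (- Z y))))"
  proof (rule integrable_mult_bounded)
    show "\<bar>g y * Z y / (exp (Z y) + exp (- Z y))\<bar> \<le> B" for y
    proof -
      have "\<bar>g y * Z y\<bar> \<le> B * (exp (Z y) + exp (- Z y))"
        using g[of y] abs_le_exp_plus_exp_uminus[of "Z y"]
        by (simp add: abs_mult mult_mono' add_pos_pos less_imp_le)
      then show ?thesis
        by (simp add: abs_divide divide_le_eq add_pos_pos)
    qed
  qed (use assms in auto)
  moreover have "(K y * exp (Z y) + K y * exp (- Z y)) * (g y * Z y / (exp (Z y) + exp (- Z y)))
      = K y * g y * Z y" for y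
  proof -
    have "exp (Z y) + exp (- Z y) \<noteq> 0"
      by (simp add: add_pos_pos less_imp_neq[symmetric])
    then show ?thesis
      by (simp add: distrib_left[symmetric])
  qed
  ultimately show ?thesis
    by simp
qed

section \<open>Entropy duality and differentiation under the integral\<close>

lemma weighted_entropy_duality:
  fixes K g Z :: "'a \<Rightarrow> real"
  assumes K_nonneg: "\<And>y. 0 \<le> K y" and K_int: "integrable M K"
    and [measurable]: "g \<in> borel_measurable M" and g_nonneg: "\<And>y. 0 \<le> g y" and g_le: "\<And>y. g y \<le> B"
    and [measurable]: "Z \<in> borel_measurable M"
    and exp_Z: "integrable M (\<lambda>y. K y * exp (Z y))" and exp_minus_Z: "integrable M (\<lambda>y. K y * exp (- Z y))"
    and pos: "0 < (\<integral>y. K y * g y \<partial>M)"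
  shows "(\<integral>y. K y * g y * Z y \<partial>M) \<le> (\<integral>y. K y * (g y * ln (g y)) \<partial>M)
      - (\<integral>y. K y * g y \<partial>M) * ln (\<integral>y. K y * g y \<partial>M)
      + (\<integral>y. K y * g y \<partial>M) * ln (\<integral>y. K y * exp (Z y) \<partial>M)"
proof -
  define G where "G = (\<integral>y. K y * g y \<partial>M)"
  define E where "E = (\<integral>y. K y * exp (Z y) \<partial>M)"
  have g_abs: "\<bar>g y\<bar> \<le> B" for y
    using g_nonneg[of y] g_le[of y] by simp
  have int_Kg: "integrable M (\<lambda>y. K y * g y)"
    by (rule integrable_mult_bounded[OF K_int _ g_abs]) simp
  have int_Kglng: "integrable M (\<lambda>y. K y * (g y * ln (g y)))"
  proof (rule integrable_mult_bounded[OF K_int])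
    show "\<bar>g y * ln (g y)\<bar> \<le> B\<^sup>2 + 1" for y
      using abs_mult_ln_le[OF g_nonneg[of y]] power_mono[OF g_le g_nonneg, of y 2] by simp
  qed simp
  have int_KgZ: "integrable M (\<lambda>y. K y * g y * Z y)"
    by (rule integrable_mult_by_exp_moments[OF K_nonneg _ _ g_abs exp_Z exp_minus_Z]) simp_all
  have E_pos: "0 < E"
  proof (rule ccontr)
    assume "\<not> 0 < E"
    moreover have "0 \<le> E"
      unfolding E_def using K_nonneg by (intro integral_nonneg_AE) auto
    ultimately have "AE y in M. K y * exp (Z y) = 0"
      using integral_nonneg_eq_0_iff_AE[OF exp_Z] K_nonneg unfolding E_def by auto
    then have "AE y in M. K y * g y = 0"
      by eventually_elim simp
    then have "G = 0"
      unfolding G_def by (simp add: integral_eq_zero_AE)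
    with pos show False
      unfolding G_def by simp
  qed
  text \<open>Integrate the pointwise Fenchel-Young inequality at \<open>Z + c\<close>, with \<open>c\<close> chosen so that
    \<open>exp c * E = G\<close>.\<close>
  define c where "c = ln G - ln E"
  have "(\<integral>y. K y * g y * (Z y + c) \<partial>M)
      \<le> (\<integral>y. K y * (g y * ln (g y)) - K y * g y + exp c * (K y * exp (Z y)) \<partial>M)"
  proof (rule integral_mono)
    show "integrable M (\<lambda>y. K y * g y * (Z y + c))"
      using int_KgZ int_Kg by (simp add: distrib_left)
    show "integrable M (\<lambda>y. K y * (g y * ln (g y)) - K y * g y + exp c * (K y * exp (Z y)))"
      using int_Kglng int_Kg exp_Z by simp
    have "K y * (g y * (Z y + c)) \<le> K y * (g y * ln (g y) - g y + exp (Z y + c))" for y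
      by (rule mult_left_mono[OF mult_le_entropy_plus_exp[OF g_nonneg] K_nonneg])
    then show "K y * g y * (Z y + c) \<le> K y * (g y * ln (g y)) - K y * g y + exp c * (K y * exp (Z y))" for y
      by (simp add: algebra_simps exp_add)
  qed
  also have "\<dots> = (\<integral>y. K y * (g y * ln (g y)) \<partial>M) - G + exp c * E"
    using int_Kglng int_Kg exp_Z unfolding G_def E_def by simp
  also have "exp c * E = G"
    using E_pos pos unfolding c_def G_def by (simp add: exp_diff)
  also have "(\<integral>y. K y * g y * (Z y + c) \<partial>M) = (\<integral>y. K y * g y * Z y \<partial>M) + c * G"
    using int_KgZ int_Kg unfolding G_def by (simp add: distrib_left)
  finally show ?thesis
    unfolding c_def G_def[symmetric] E_def[symmetric] by (simp add: algebra_simps)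
qed

lemma integral_dominated_convergence_at:
  fixes s :: "'c::first_countable_topology \<Rightarrow> 'a \<Rightarrow> 'b::{banach, second_countable_topology}"
    and w :: "'a \<Rightarrow> real"
  assumes "f \<in> borel_measurable M" "\<And>r. s r \<in> borel_measurable M" "integrable M w"
    and lim: "AE x in M. ((\<lambda>r. s r x) \<longlongrightarrow> f x) (at a)"
    and bound: "\<forall>\<^sub>F r in at a. AE x in M. norm (s r x) \<le> w x"
  shows "((\<lambda>r. integral\<^sup>L M (s r)) \<longlongrightarrow> integral\<^sup>L M f) (at a)"
proof (unfold tendsto_at_iff_sequentially comp_def, intro allI impI)
  fix X :: "nat \<Rightarrow> 'c"
  assume "\<forall>i. X i \<in> UNIV - {a}" and "X \<longlonglongrightarrow> a"
  then have X: "filterlim X (at a) sequentially"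
    by (simp add: filterlim_at)
  from filterlim_iff[THEN iffD1, OF X, rule_format, OF bound]
  obtain N where w: "\<And>n. N \<le> n \<Longrightarrow> AE x in M. norm (s (X n) x) \<le> w x"
    by (auto simp: eventually_sequentially)
  show "(\<lambda>n. integral\<^sup>L M (s (X n))) \<longlonglongrightarrow> integral\<^sup>L M f"
  proof (rule LIMSEQ_offset, rule integral_dominated_convergence)
    show "AE x in M. norm (s (X (n + N)) x) \<le> w x" for n
      by (rule w) simp
    show "AE x in M. (\<lambda>n. s (X (n + N)) x) \<longlonglongrightarrow> f x"
      using lim
    proof eventually_elim
      fix x
      assume "((\<lambda>r. s r x) \<longlongrightarrow> f x) (at a)"
      then show "(\<lambda>n. s (X (n + N)) x) \<longlonglongrightarrow> f x"
        by (intro LIMSEQ_ignore_initial_segment filterlim_compose[OF _ X])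
    qed
  qed fact+
qed

lemma has_real_derivative_integral_tilt:
  fixes K F L :: "'a \<Rightarrow> real" and Q :: real
  assumes [measurable]: "K \<in> borel_measurable M" "F \<in> borel_measurable M" "L \<in> borel_measurable M"
    and K_nonneg: "\<And>y. 0 \<le> K y" and F_bound: "\<And>y. \<bar>F y\<bar> \<le> B"
    and exp_moments: "\<And>s. integrable M (\<lambda>y. K y * exp (s * L y))"
  shows "((\<lambda>s. \<integral>y. K y * F y * exp (s * L y - s\<^sup>2 * Q) \<partial>M) has_real_derivative
           (\<integral>y. K y * F y * L y \<partial>M)) (at 0)"
proof -
  define h where "h s = (\<integral>y. K y * F y * exp (s * L y - s\<^sup>2 * Q) \<partial>M)" for s
  define q where "q s y = K y * F y * ((exp (s * L y - s\<^sup>2 * Q) - 1) / s)" for s y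
  have B: "0 \<le> B"
    using F_bound[of undefined] by linarith
  have int: "integrable M (\<lambda>y. K y * F y * exp (s * L y - s\<^sup>2 * Q))" for s
  proof -
    have eq: "K y * F y * exp (s * L y - s\<^sup>2 * Q) = K y * exp (s * L y) * (F y * exp (- s\<^sup>2 * Q))" for y
      by (simp add: exp_diff exp_minus divide_inverse)
    have "\<bar>F y * exp (- s\<^sup>2 * Q)\<bar> \<le> B * exp (- s\<^sup>2 * Q)" for y
      using F_bound[of y] by (simp add: abs_mult)
    then show ?thesis
      unfolding eq by (intro integrable_mult_bounded[OF exp_moments]) simp_all
  qed
  have quotient: "(h s - h 0) / (s - 0) = (\<integral>y. q s y \<partial>M)" for s
  proof -
    have "h s - h 0 = (\<integral>y. K y * F y * exp (s * L y - s\<^sup>2 * Q) - K y * F y \<partial>M)"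
      unfolding h_def using int[of s] int[of 0] by simp
    also have "\<dots> = (\<integral>y. K y * F y * (exp (s * L y - s\<^sup>2 * Q) - 1) \<partial>M)"
      by (simp add: right_diff_distrib)
    finally show ?thesis
      unfolding q_def by (simp add: integral_divide_zero)
  qed
  have "((\<lambda>s. \<integral>y. q s y \<partial>M) \<longlongrightarrow> (\<integral>y. K y * F y * L y \<partial>M)) (at 0)"
  proof (rule integral_dominated_convergence_at[where
        w = "\<lambda>y. B * exp (2 * \<bar>Q\<bar>) * (K y * exp (2 * L y) + K y * exp (- 2 * L y))"])
    show "(\<lambda>y. K y * F y * L y) \<in> borel_measurable M" "\<And>s. q s \<in> borel_measurable M"
      unfolding q_def by measurable
    show "integrable M (\<lambda>y. B * exp (2 * \<bar>Q\<bar>) * (K y * exp (2 * L y) + K y * exp (- 2 * L y)))"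
      using exp_moments[of 2] exp_moments[of "- 2"] by simp
    show "AE y in M. ((\<lambda>s. q s y) \<longlongrightarrow> K y * F y * L y) (at 0)"
    proof (rule AE_I2)
      fix y
      have "((\<lambda>s. exp (s * L y - s\<^sup>2 * Q)) has_real_derivative 1 * (L y - 2 * 0 * Q)) (at 0)"
        by (auto intro!: derivative_eq_intros)
      then show "((\<lambda>s. q s y) \<longlongrightarrow> K y * F y * L y) (at 0)"
        unfolding has_field_derivative_iff q_def by (intro tendsto_mult_left) simp
    qed
    have "\<forall>\<^sub>F s in at 0. s \<noteq> 0 \<and> \<bar>s\<bar> \<le> (1::real)"
      by (auto simp: eventually_at intro!: exI[of _ 1])
    then show "\<forall>\<^sub>F s in at 0. AE y in M.
        norm (q s y) \<le> B * exp (2 * \<bar>Q\<bar>) * (K y * exp (2 * L y) + K y * exp (- 2 * L y))"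
    proof eventually_elim
      case (elim s)
      have "\<bar>q s y\<bar> \<le> K y * B * (exp (2 * \<bar>Q\<bar>) * (exp (2 * L y) + exp (- 2 * L y)))" for y
        unfolding q_def abs_mult abs_of_nonneg[OF K_nonneg]
        using K_nonneg[of y] F_bound[of y] B abs_exp_tilt_quotient_le[of s "L y" Q] elim
        by (intro mult_mono mult_left_mono) simp_all
      then show ?case
        by (intro AE_I2) (simp add: algebra_simps)
    qed
  qed
  then show ?thesis
    unfolding has_field_derivative_iff h_def[symmetric] quotient .
qed

section \<open>The Gaussian kernel\<close>

lemma nn_integral_lborel_vec_prod:
  fixes \<phi> :: "'d::finite \<Rightarrow> real \<Rightarrow> ennreal"
  assumes [measurable]: "\<And>j. \<phi> j \<in> borel_measurable borel"
  shows "(\<integral>\<^sup>+x. (\<Prod>j\<in>UNIV. \<phi> j (x $ j)) \<partial>(lborel :: (real^'d) measure)) = (\<Prod>j\<in>UNIV. \<integral>\<^sup>+z. \<phi> j z \<partial>lborel)"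
proof -
  have Basis: "(Basis :: (real^'d) set) = range (\<lambda>j. axis j 1)"
    by (auto simp: Basis_vec_def)
  have inj: "inj (\<lambda>j::'d. axis j (1::real))"
    by (auto simp: inj_def axis_eq_axis)
  have "(\<integral>\<^sup>+x. (\<Prod>b\<in>Basis. \<phi> (axis_index b) (x \<bullet> b)) \<partial>(lborel :: (real^'d) measure))
      = (\<Prod>b\<in>(Basis :: (real^'d) set). \<integral>\<^sup>+z. \<phi> (axis_index b) z \<partial>lborel)"
    by (rule nn_integral_lborel_prod) auto
  then show ?thesis
    unfolding Basis by (simp add: prod.reindex[OF inj] inner_axis)
qed

lemma nn_integral_normal_density: "0 < s \<Longrightarrow> (\<integral>\<^sup>+x. ennreal (normal_density \<mu> s x) \<partial>lborel) = 1"
  by (subst nn_integral_eq_integral) (auto intro: integrable_normal_density integral_normal_density)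

lemma kolm_det_eq: "kolm_det \<sigma> t = \<sigma> ^ 4 * t ^ 4 / 12"
  unfolding kolm_det_def kolm_var_b_def kolm_var_c_def kolm_cov_def by (simp add: eval_nat_numeral field_simps)

text \<open>Disintegration of the law of \<open>(B\<^sub>t, \<integral>\<^sub>0\<^sup>t B\<^sub>s ds)\<close> with respect to \<open>B\<^sub>t\<close>.\<close>
lemma kolm_density2_eq_normal_densities:
  assumes "0 < \<sigma>" "0 < t"
  shows "kolm_density2 \<sigma> t b c = normal_density 0 (sqrt (kolm_var_b \<sigma> t)) b *
     normal_density (kolm_cov \<sigma> t * b / kolm_var_b \<sigma> t) (sqrt (kolm_det \<sigma> t / kolm_var_b \<sigma> t)) c"
proof -
  define Vb C Vc D where "Vb = kolm_var_b \<sigma> t" and "C = kolm_cov \<sigma> t"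
    and "Vc = kolm_var_c \<sigma> t" and "D = kolm_det \<sigma> t"
  have Vb: "0 < Vb"
    unfolding Vb_def kolm_var_b_def using assms by simp
  have D: "0 < D"
    unfolding D_def kolm_det_eq using assms by simp
  have Vc: "Vc = (C\<^sup>2 + D) / Vb"
    using Vb unfolding D_def kolm_det_def Vb_def Vc_def C_def by (simp add: field_simps)
  have norm: "sqrt (2 * pi * (sqrt Vb)\<^sup>2) * sqrt (2 * pi * (sqrt (D / Vb))\<^sup>2) = 2 * pi * sqrt D"
  proof -
    have "sqrt (2 * pi * (sqrt Vb)\<^sup>2) * sqrt (2 * pi * (sqrt (D / Vb))\<^sup>2)
        = sqrt ((2 * pi * Vb) * (2 * pi * (D / Vb)))"
      using Vb D by (simp add: real_sqrt_mult[symmetric])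
    also have "(2 * pi * Vb) * (2 * pi * (D / Vb)) = (2 * pi)\<^sup>2 * D"
      using Vb by (simp add: field_simps power2_eq_square)
    finally show ?thesis
      by (simp add: real_sqrt_mult)
  qed
  have expo: "- (Vc * b\<^sup>2 - 2 * C * b * c + Vb * c\<^sup>2) / (2 * D) =
      - (b - 0)\<^sup>2 / (2 * (sqrt Vb)\<^sup>2) + - (c - C * b / Vb)\<^sup>2 / (2 * (sqrt (D / Vb))\<^sup>2)"
    using Vb D unfolding Vc by (simp add: field_simps power2_eq_square)
  show ?thesis
    unfolding kolm_density2_def normal_density_def Vb_def[symmetric] C_def[symmetric]
      Vc_def[symmetric] D_def[symmetric] expo exp_add norm[symmetric]
    by simp
qed

lemma kolm_density2_nonneg: "0 < \<sigma> \<Longrightarrow> 0 < t \<Longrightarrow> 0 \<le> kolm_density2 \<sigma> t b c"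
  by (simp add: kolm_density2_eq_normal_densities)

lemma kolm_density_nonneg: "0 < \<sigma> \<Longrightarrow> 0 < t \<Longrightarrow> 0 \<le> kolm_density \<sigma> t b c"
  unfolding kolm_density_def by (intro prod_nonneg) (simp add: kolm_density2_nonneg)

lemma borel_measurable_fst_vec_nth[measurable]:
  "(\<lambda>x::(real^'d) \<times> (real^'d). fst x $ j) \<in> borel_measurable borel"
  by (intro borel_measurable_continuous_onI continuous_intros)

lemma borel_measurable_snd_vec_nth[measurable]:
  "(\<lambda>x::(real^'d) \<times> (real^'d). snd x $ j) \<in> borel_measurable borel"
  by (intro borel_measurable_continuous_onI continuous_intros)

abbreviation kolm_kernel :: "real \<Rightarrow> real \<Rightarrow> (real^'d::finite) \<times> (real^'d) \<Rightarrow> real" where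
  "kolm_kernel \<sigma> t y \<equiv> kolm_density \<sigma> t (fst y) (snd y)"

lemma borel_measurable_kolm_kernel[measurable]:
  "kolm_kernel \<sigma> t \<in> borel_measurable (borel :: ((real^'d::finite) \<times> (real^'d)) measure)"
  unfolding kolm_density_def kolm_density2_def by measurable

lemma nn_integral_kolm_kernel:
  assumes "0 < \<sigma>" "0 < t"
  shows "(\<integral>\<^sup>+y. ennreal (kolm_kernel \<sigma> t y) \<partial>(lborel :: ((real^'d::finite) \<times> (real^'d)) measure)) = 1"
proof -
  define Vb where "Vb = kolm_var_b \<sigma> t"
  have Vb: "0 < Vb"
    unfolding Vb_def kolm_var_b_def using assms by simp
  have D: "0 < kolm_det \<sigma> t / Vb"
    unfolding kolm_det_eq using assms Vb by simp
  have inner: "(\<integral>\<^sup>+c. ennreal (kolm_density \<sigma> t b c) \<partial>lborel)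
      = (\<Prod>j\<in>UNIV. ennreal (normal_density 0 (sqrt Vb) (b $ j)))" for b :: "real^'d"
  proof -
    have "(\<integral>\<^sup>+c. ennreal (kolm_density \<sigma> t b c) \<partial>lborel)
        = (\<integral>\<^sup>+c. (\<Prod>j\<in>UNIV. ennreal (kolm_density2 \<sigma> t (b $ j) (c $ j))) \<partial>lborel)"
      unfolding kolm_density_def using assms by (subst prod_ennreal) (auto simp: kolm_density2_nonneg)
    also have "\<dots> = (\<Prod>j\<in>UNIV. \<integral>\<^sup>+z. ennreal (kolm_density2 \<sigma> t (b $ j) z) \<partial>lborel)"
      by (rule nn_integral_lborel_vec_prod) (unfold kolm_density2_def, measurable)
    also have "\<dots> = (\<Prod>j\<in>UNIV. ennreal (normal_density 0 (sqrt Vb) (b $ j)))"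
      using assms D unfolding Vb_def
      by (simp add: kolm_density2_eq_normal_densities ennreal_mult nn_integral_cmult nn_integral_normal_density)
    finally show ?thesis .
  qed
  have "(\<integral>\<^sup>+y. ennreal (kolm_kernel \<sigma> t y) \<partial>(lborel :: ((real^'d) \<times> (real^'d)) measure))
      = (\<integral>\<^sup>+y. ennreal (kolm_kernel \<sigma> t y) \<partial>(lborel \<Otimes>\<^sub>M lborel :: ((real^'d) \<times> (real^'d)) measure))"
    by (simp add: lborel_prod)
  also have "\<dots> = (\<integral>\<^sup>+b. \<integral>\<^sup>+c. ennreal (kolm_density \<sigma> t b c) \<partial>lborel \<partial>(lborel :: (real^'d) measure))"
    by (subst lborel.nn_integral_fst[symmetric]) (auto simp: lborel_prod)
  also have "\<dots> = (\<Prod>j\<in>(UNIV::'d set). \<integral>\<^sup>+z. ennreal (normal_density 0 (sqrt Vb) z) \<partial>lborel)"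
    unfolding inner by (rule nn_integral_lborel_vec_prod) measurable
  also have "\<dots> = 1"
    using Vb by (simp add: nn_integral_normal_density)
  finally show ?thesis .
qed

lemma integrable_kolm_kernel:
  "0 < \<sigma> \<Longrightarrow> 0 < t \<Longrightarrow> integrable lborel (kolm_kernel \<sigma> t :: (real^'d::finite) \<times> (real^'d) \<Rightarrow> real)"
  by (intro integrableI_nonneg) (auto simp: nn_integral_kolm_kernel kolm_density_nonneg)

lemma integral_kolm_kernel:
  assumes "0 < \<sigma>" "0 < t"
  shows "(\<integral>y. kolm_kernel \<sigma> t y \<partial>(lborel :: ((real^'d::finite) \<times> (real^'d)) measure)) = 1"
proof -
  have int: "integrable lborel (kolm_kernel \<sigma> t :: (real^'d) \<times> (real^'d) \<Rightarrow> real)"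
    using assms by (rule integrable_kolm_kernel)
  have "ennreal (\<integral>y. kolm_kernel \<sigma> t y \<partial>(lborel :: ((real^'d) \<times> (real^'d)) measure)) = 1"
    using nn_integral_kolm_kernel[OF assms, where 'd='d] nn_integral_eq_integral[OF int] assms
    by (simp add: kolm_density_nonneg)
  then show ?thesis
    by simp
qed

text \<open>\<open>kolm_prec2 \<sigma> t b c \<alpha> \<gamma>\<close> is \<open>(b, c) \<Sigma>\<inverse> (\<alpha>, \<gamma>)\<close> for the covariance matrix \<open>\<Sigma>\<close> of one coordinate of
  \<open>(B\<^sub>t, \<integral>\<^sub>0\<^sup>t B\<^sub>s ds)\<close>; \<open>kolm_prec\<close> is the corresponding pairing on \<open>\<real>\<^sup>d \<times> \<real>\<^sup>d\<close>.\<close>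
definition kolm_prec2 :: "real \<Rightarrow> real \<Rightarrow> real \<Rightarrow> real \<Rightarrow> real \<Rightarrow> real \<Rightarrow> real" where
  "kolm_prec2 \<sigma> t b c \<alpha> \<gamma> =
     (kolm_var_c \<sigma> t * b * \<alpha> - kolm_cov \<sigma> t * (b * \<gamma> + c * \<alpha>) + kolm_var_b \<sigma> t * c * \<gamma>) / kolm_det \<sigma> t"

definition kolm_prec :: "real \<Rightarrow> real \<Rightarrow> (real^'d::finite) \<times> (real^'d) \<Rightarrow> (real^'d) \<times> (real^'d) \<Rightarrow> real" where
  "kolm_prec \<sigma> t y w = (\<Sum>j\<in>UNIV. kolm_prec2 \<sigma> t (fst y $ j) (snd y $ j) (fst w $ j) (snd w $ j))"

definition kolm_energy :: "real \<Rightarrow> real \<Rightarrow> (real^'d::finite) \<times> (real^'d) \<Rightarrow> real" where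
  "kolm_energy \<sigma> t w = kolm_prec \<sigma> t w w / 2"

lemma borel_measurable_kolm_prec[measurable]: "(\<lambda>y. kolm_prec \<sigma> t y w) \<in> borel_measurable borel"
  unfolding kolm_prec_def kolm_prec2_def by measurable

lemma kolm_density2_diff:
  assumes "0 < \<sigma>" "0 < t"
  shows "kolm_density2 \<sigma> t (b - s * \<alpha>) (c - s * \<gamma>)
    = kolm_density2 \<sigma> t b c * exp (s * kolm_prec2 \<sigma> t b c \<alpha> \<gamma> - s\<^sup>2 * (kolm_prec2 \<sigma> t \<alpha> \<gamma> \<alpha> \<gamma> / 2))"
proof -
  have "kolm_det \<sigma> t \<noteq> 0"
    unfolding kolm_det_eq using assms by simp
  then have "- (kolm_var_c \<sigma> t * (b - s * \<alpha>)\<^sup>2 - 2 * kolm_cov \<sigma> t * (b - s * \<alpha>) * (c - s * \<gamma>)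
        + kolm_var_b \<sigma> t * (c - s * \<gamma>)\<^sup>2) / (2 * kolm_det \<sigma> t)
      = - (kolm_var_c \<sigma> t * b\<^sup>2 - 2 * kolm_cov \<sigma> t * b * c + kolm_var_b \<sigma> t * c\<^sup>2) / (2 * kolm_det \<sigma> t)
        + (s * kolm_prec2 \<sigma> t b c \<alpha> \<gamma> - s\<^sup>2 * (kolm_prec2 \<sigma> t \<alpha> \<gamma> \<alpha> \<gamma> / 2))"
    unfolding kolm_prec2_def by (simp add: field_simps power2_eq_square)
  then show ?thesis
    unfolding kolm_density2_def by (simp add: exp_add)
qed

lemma kolm_kernel_diff:
  assumes "0 < \<sigma>" "0 < t"
  shows "kolm_kernel \<sigma> t (y - s *\<^sub>R w) = kolm_kernel \<sigma> t y * exp (s * kolm_prec \<sigma> t y w - s\<^sup>2 * kolm_energy \<sigma> t w)"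
proof -
  have "kolm_kernel \<sigma> t (y - s *\<^sub>R w) = (\<Prod>j\<in>UNIV. kolm_density2 \<sigma> t (fst y $ j) (snd y $ j)
      * exp (s * kolm_prec2 \<sigma> t (fst y $ j) (snd y $ j) (fst w $ j) (snd w $ j)
        - s\<^sup>2 * (kolm_prec2 \<sigma> t (fst w $ j) (snd w $ j) (fst w $ j) (snd w $ j) / 2)))"
    unfolding kolm_density_def by (simp add: kolm_density2_diff[OF assms])
  also have "\<dots> = kolm_kernel \<sigma> t y * exp (s * kolm_prec \<sigma> t y w - s\<^sup>2 * kolm_energy \<sigma> t w)"
    unfolding kolm_density_def kolm_energy_def kolm_prec_def prod.distrib
    by (simp add: exp_sum[symmetric] sum_distrib_left sum_subtractf sum_divide_distrib)
  finally show ?thesis .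
qed

lemma lborel_integral_translate:
  fixes g :: "'a::euclidean_space \<Rightarrow> 'b::{banach, second_countable_topology}"
  assumes [measurable]: "g \<in> borel_measurable borel"
  shows "(\<integral>y. g (y + v) \<partial>lborel) = (\<integral>y. g y \<partial>lborel)"
proof -
  have "(\<integral>y. g y \<partial>lborel) = (\<integral>y. g y \<partial>distr lborel borel ((+) v))"
    by (simp add: lborel_distr_plus)
  also have "\<dots> = (\<integral>y. g (v + y) \<partial>lborel)"
    by (subst integral_distr) auto
  finally show ?thesis
    by (simp add: add.commute)
qed

lemma lborel_integrable_translate_iff:
  fixes g :: "'a::euclidean_space \<Rightarrow> 'b::{banach, second_countable_topology}"
  assumes [measurable]: "g \<in> borel_measurable borel"
  shows "integrable lborel (\<lambda>y. g (y + v)) \<longleftrightarrow> integrable lborel g"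
proof -
  have "integrable lborel g \<longleftrightarrow> integrable (distr lborel borel ((+) v)) g"
    by (simp add: lborel_distr_plus)
  also have "\<dots> \<longleftrightarrow> integrable lborel (\<lambda>y. g (v + y))"
    by (subst integrable_distr_eq) auto
  finally show ?thesis
    by (simp add: add.commute)
qed

lemma kolm_kernel_exp_moment:
  fixes w :: "(real^'d::finite) \<times> (real^'d)"
  assumes "0 < \<sigma>" "0 < t"
  shows "integrable lborel (\<lambda>y. kolm_kernel \<sigma> t y * exp (s * kolm_prec \<sigma> t y w))"
    and "(\<integral>y. kolm_kernel \<sigma> t y * exp (kolm_prec \<sigma> t y w) \<partial>lborel) = exp (kolm_energy \<sigma> t w)"
proof -
  have tilt: "kolm_kernel \<sigma> t y * exp (s * kolm_prec \<sigma> t y w)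
      = exp (s\<^sup>2 * kolm_energy \<sigma> t w) * kolm_kernel \<sigma> t (y + (- s) *\<^sub>R w)" for s y
    using kolm_kernel_diff[OF assms, of y s w] by (simp add: exp_diff)
  show "integrable lborel (\<lambda>y. kolm_kernel \<sigma> t y * exp (s * kolm_prec \<sigma> t y w))"
    unfolding tilt
  proof (intro integrable_mult_right)
    show "integrable lborel (\<lambda>y. kolm_kernel \<sigma> t (y + (- s) *\<^sub>R w))"
      using lborel_integrable_translate_iff[where g = "kolm_kernel \<sigma> t" and v = "(- s :: real) *\<^sub>R w"]
        integrable_kolm_kernel[OF assms, where 'd='d]
      by simp
  qed
  have "(\<integral>y. kolm_kernel \<sigma> t y * exp (kolm_prec \<sigma> t y w) \<partial>lborel)
      = exp (kolm_energy \<sigma> t w) * (\<integral>y. kolm_kernel \<sigma> t (y + (- 1) *\<^sub>R w) \<partial>lborel)"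
    using tilt[where s = 1] by (simp del: scaleR_minus_left)
  also have "(\<integral>y. kolm_kernel \<sigma> t (y + (- 1) *\<^sub>R w) \<partial>lborel) = 1"
    using lborel_integral_translate[where g = "kolm_kernel \<sigma> t" and v = "(- 1 :: real) *\<^sub>R w"]
      integral_kolm_kernel[OF assms, where 'd='d]
    by (simp del: scaleR_minus_left)
  finally show "(\<integral>y. kolm_kernel \<sigma> t y * exp (kolm_prec \<sigma> t y w) \<partial>lborel) = exp (kolm_energy \<sigma> t w)"
    by simp
qed

section \<open>The Kolmogorov semigroup\<close>

definition kolm_transport :: "real \<Rightarrow> (real^'d::finite) \<times> (real^'d) \<Rightarrow> (real^'d) \<times> (real^'d)" where
  "kolm_transport t x = (fst x, snd x + t *\<^sub>R fst x)"

lemma kolm_transport_add_scaleR: "kolm_transport t (x + r *\<^sub>R v) = kolm_transport t x + r *\<^sub>R kolm_transport t v"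
  by (simp add: kolm_transport_def algebra_simps)

lemma kolm_sg_eq_integral:
  fixes \<phi> :: "(real^'d::finite) \<times> (real^'d) \<Rightarrow> real"
  assumes "0 < \<sigma>" "0 < t" and [measurable]: "\<phi> \<in> borel_measurable borel" and bound: "\<And>z. \<bar>\<phi> z\<bar> \<le> B"
  shows "kolm_sg \<sigma> t \<phi> x = (\<integral>y. kolm_kernel \<sigma> t y * \<phi> (kolm_transport t x + y) \<partial>lborel)"
proof -
  have "integrable lborel (\<lambda>y. kolm_kernel \<sigma> t y * \<phi> (kolm_transport t x + y))"
    by (rule integrable_mult_bounded[OF integrable_kolm_kernel[OF assms(1,2)] _ bound]) simp
  then have "integrable (lborel \<Otimes>\<^sub>M lborel) (\<lambda>y. kolm_kernel \<sigma> t y * \<phi> (kolm_transport t x + y))"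
    by (simp add: lborel_prod)
  from lborel_pair.integral_fst'[OF this] show ?thesis
    unfolding kolm_sg_def by (simp add: lborel_prod kolm_transport_def add.assoc)
qed

lemma kolm_sg_nonneg:
  assumes "0 < \<sigma>" "0 < t" and "\<And>z. 0 \<le> \<phi> z"
  shows "0 \<le> kolm_sg \<sigma> t \<phi> x"
  unfolding kolm_sg_def using assms by (intro integral_nonneg_AE AE_I2 mult_nonneg_nonneg kolm_density_nonneg)

lemma kolm_sg_translate:
  fixes \<phi> :: "(real^'d::finite) \<times> (real^'d) \<Rightarrow> real"
  assumes "0 < \<sigma>" "0 < t" and [measurable]: "\<phi> \<in> borel_measurable borel" and "\<And>z. \<bar>\<phi> z\<bar> \<le> B"
  shows "kolm_sg \<sigma> t \<phi> (x + r *\<^sub>R v) = (\<integral>y. kolm_kernel \<sigma> t y * \<phi> (kolm_transport t x + y)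
      * exp (r * kolm_prec \<sigma> t y (kolm_transport t v) - r\<^sup>2 * kolm_energy \<sigma> t (kolm_transport t v)) \<partial>lborel)"
proof -
  define w where "w = kolm_transport t v"
  define g where "g y = kolm_kernel \<sigma> t (y - r *\<^sub>R w) * \<phi> (kolm_transport t x + y)" for y
  have "(\<lambda>y::(real^'d) \<times> (real^'d). y - r *\<^sub>R w) \<in> borel \<rightarrow>\<^sub>M borel"
    by (intro borel_measurable_continuous_onI continuous_intros)
  then have "(\<lambda>y. kolm_kernel \<sigma> t (y - r *\<^sub>R w)) \<in> borel_measurable borel"
    by (rule measurable_compose) simp
  then have [measurable]: "g \<in> borel_measurable borel"
    unfolding g_def by measurable
  have "kolm_sg \<sigma> t \<phi> (x + r *\<^sub>R v) = (\<integral>y. g (y + r *\<^sub>R w) \<partial>lborel)"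
    unfolding kolm_sg_eq_integral[OF assms] g_def w_def kolm_transport_add_scaleR by (simp add: add_ac)
  also have "\<dots> = (\<integral>y. g y \<partial>lborel)"
    by (rule lborel_integral_translate) simp
  finally show ?thesis
    unfolding g_def w_def kolm_kernel_diff[OF assms(1,2)] by (simp add: mult_ac)
qed

lemma kolm_sg_log_deriv:
  fixes \<phi> :: "(real^'d::finite) \<times> (real^'d) \<Rightarrow> real"
  assumes "0 < \<sigma>" "0 < t" and [measurable]: "\<phi> \<in> borel_measurable borel" and bound: "\<And>z. \<bar>\<phi> z\<bar> \<le> B"
    and pos: "0 < kolm_sg \<sigma> t \<phi> x"
  shows "deriv (\<lambda>r. ln (kolm_sg \<sigma> t \<phi> (x + r *\<^sub>R v))) 0
    = (\<integral>y. kolm_kernel \<sigma> t y * \<phi> (kolm_transport t x + y) * kolm_prec \<sigma> t y (kolm_transport t v) \<partial>lborel)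
      / kolm_sg \<sigma> t \<phi> x"
proof -
  define h where "h r = kolm_sg \<sigma> t \<phi> (x + r *\<^sub>R v)" for r
  define D where "D = (\<integral>y. kolm_kernel \<sigma> t y * \<phi> (kolm_transport t x + y) * kolm_prec \<sigma> t y (kolm_transport t v) \<partial>lborel)"
  have "(h has_real_derivative D) (at 0)"
    unfolding h_def D_def kolm_sg_translate[OF assms(1-4)]
  proof (rule has_real_derivative_integral_tilt)
    show "0 \<le> kolm_kernel \<sigma> t y" for y
      using assms(1,2) by (rule kolm_density_nonneg)
    show "\<bar>\<phi> (kolm_transport t x + y)\<bar> \<le> B" for y
      by (rule bound)
    show "integrable lborel (\<lambda>y. kolm_kernel \<sigma> t y * exp (s * kolm_prec \<sigma> t y (kolm_transport t v)))" for s
      using assms(1,2) by (rule kolm_kernel_exp_moment(1))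
  qed simp_all
  moreover have h0: "h 0 = kolm_sg \<sigma> t \<phi> x"
    by (simp add: h_def)
  ultimately have "((\<lambda>r. ln (h r)) has_real_derivative inverse (h 0) * D) (at 0)"
    using pos by (intro DERIV_chain2[OF DERIV_ln]) simp_all
  then show ?thesis
    unfolding h_def D_def[symmetric] h0 by (intro DERIV_imp_deriv) (simp add: divide_inverse mult.commute)
qed

lemma kolm_sg_eq_0_everywhere:
  fixes \<phi> :: "(real^'d::finite) \<times> (real^'d) \<Rightarrow> real"
  assumes "0 < \<sigma>" "0 < t" and [measurable]: "\<phi> \<in> borel_measurable borel"
    and nonneg: "\<And>z. 0 \<le> \<phi> z" and le: "\<And>z. \<phi> z \<le> B" and zero: "kolm_sg \<sigma> t \<phi> x = 0"
  shows "kolm_sg \<sigma> t \<phi> x' = 0"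
proof -
  have bound: "\<bar>\<phi> z\<bar> \<le> B" for z
    using nonneg[of z] le[of z] by simp
  have "integrable lborel (\<lambda>y. kolm_kernel \<sigma> t y * \<phi> (kolm_transport t x + y))"
    by (rule integrable_mult_bounded[OF integrable_kolm_kernel[OF assms(1,2)] _ bound]) simp
  moreover have "AE y in lborel. 0 \<le> kolm_kernel \<sigma> t y * \<phi> (kolm_transport t x + y)"
    using assms(1,2) nonneg by (intro AE_I2 mult_nonneg_nonneg kolm_density_nonneg)
  moreover have "(\<integral>y. kolm_kernel \<sigma> t y * \<phi> (kolm_transport t x + y) \<partial>lborel) = 0"
    using zero by (simp add: kolm_sg_eq_integral[OF assms(1-3) bound])
  ultimately have "AE y in lborel. kolm_kernel \<sigma> t y * \<phi> (kolm_transport t x + y) = 0"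
    by (simp add: integral_nonneg_eq_0_iff_AE)
  then have "kolm_sg \<sigma> t \<phi> (x + 1 *\<^sub>R (x' - x)) = 0"
    unfolding kolm_sg_translate[OF assms(1-3) bound] by (intro integral_eq_zero_AE) (auto elim: eventually_mono)
  then show ?thesis
    by simp
qed

lemma kolm_prec_transport_expand:
  "kolm_prec \<sigma> t y (kolm_transport t v) = (\<Sum>i\<in>UNIV.
      fst v $ i * kolm_prec \<sigma> t y (kolm_transport t (axis i 1, 0))
    + snd v $ i * kolm_prec \<sigma> t y (kolm_transport t (0, axis i 1)))"
proof -
  have unit: "kolm_prec \<sigma> t y (kolm_transport t (axis i 1, 0)) = kolm_prec2 \<sigma> t (fst y $ i) (snd y $ i) 1 t"
    "kolm_prec \<sigma> t y (kolm_transport t (0, axis i 1)) = kolm_prec2 \<sigma> t (fst y $ i) (snd y $ i) 0 1" for i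
  proof -
    have "kolm_prec \<sigma> t y (kolm_transport t (axis i 1, 0))
        = (\<Sum>j\<in>UNIV. if j = i then kolm_prec2 \<sigma> t (fst y $ i) (snd y $ i) 1 t else 0)"
      unfolding kolm_prec_def kolm_transport_def by (intro sum.cong refl) (auto simp: axis_def kolm_prec2_def)
    moreover have "kolm_prec \<sigma> t y (kolm_transport t (0, axis i 1))
        = (\<Sum>j\<in>UNIV. if j = i then kolm_prec2 \<sigma> t (fst y $ i) (snd y $ i) 0 1 else 0)"
      unfolding kolm_prec_def kolm_transport_def by (intro sum.cong refl) (auto simp: axis_def kolm_prec2_def)
    ultimately show "kolm_prec \<sigma> t y (kolm_transport t (axis i 1, 0)) = kolm_prec2 \<sigma> t (fst y $ i) (snd y $ i) 1 t"
      "kolm_prec \<sigma> t y (kolm_transport t (0, axis i 1)) = kolm_prec2 \<sigma> t (fst y $ i) (snd y $ i) 0 1"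
      by simp_all
  qed
  have lin: "kolm_prec2 \<sigma> t b c \<alpha> (\<beta> + t * \<alpha>) = \<alpha> * kolm_prec2 \<sigma> t b c 1 t + \<beta> * kolm_prec2 \<sigma> t b c 0 1" for b c \<alpha> \<beta>
    unfolding kolm_prec2_def by (simp add: algebra_simps add_divide_distrib diff_divide_distrib)
  show ?thesis
    unfolding unit unfolding kolm_prec_def kolm_transport_def by (simp add: lin)
qed

lemma kolm_sg_log_deriv_eq_sum:
  fixes \<phi> :: "(real^'d::finite) \<times> (real^'d) \<Rightarrow> real"
  assumes "0 < \<sigma>" "0 < t" and [measurable]: "\<phi> \<in> borel_measurable borel" and bound: "\<And>z. \<bar>\<phi> z\<bar> \<le> B"
    and pos: "0 < kolm_sg \<sigma> t \<phi> x"
  shows "deriv (\<lambda>r. ln (kolm_sg \<sigma> t \<phi> (x + r *\<^sub>R v))) 0 = (\<Sum>i\<in>UNIV.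
      fst v $ i * deriv (\<lambda>s. ln (kolm_sg \<sigma> t \<phi> (fst x + s *\<^sub>R axis i 1, snd x))) 0
    + snd v $ i * deriv (\<lambda>s. ln (kolm_sg \<sigma> t \<phi> (fst x, snd x + s *\<^sub>R axis i 1))) 0)"
proof -
  define D where "D w = (\<integral>y. kolm_kernel \<sigma> t y * \<phi> (kolm_transport t x + y)
      * kolm_prec \<sigma> t y (kolm_transport t w) \<partial>lborel)" for w
  have deriv_eq: "deriv (\<lambda>r. ln (kolm_sg \<sigma> t \<phi> (x + r *\<^sub>R w))) 0 = D w / kolm_sg \<sigma> t \<phi> x" for w
    unfolding D_def by (rule kolm_sg_log_deriv[OF assms])
  have int: "integrable lborel (\<lambda>y. kolm_kernel \<sigma> t y * \<phi> (kolm_transport t x + y) * kolm_prec \<sigma> t y w)" for w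
  proof (rule integrable_mult_by_exp_moments[OF _ _ _ bound])
    show "integrable lborel (\<lambda>y. kolm_kernel \<sigma> t y * exp (kolm_prec \<sigma> t y w))"
      "integrable lborel (\<lambda>y. kolm_kernel \<sigma> t y * exp (- kolm_prec \<sigma> t y w))"
      using kolm_kernel_exp_moment(1)[OF assms(1,2), of 1 w] kolm_kernel_exp_moment(1)[OF assms(1,2), of "- 1" w]
      by simp_all
  qed (use assms(1,2) in \<open>simp_all add: kolm_density_nonneg\<close>)
  have "D v = (\<integral>y. (\<Sum>i\<in>UNIV.
        fst v $ i * (kolm_kernel \<sigma> t y * \<phi> (kolm_transport t x + y) * kolm_prec \<sigma> t y (kolm_transport t (axis i 1, 0)))
      + snd v $ i * (kolm_kernel \<sigma> t y * \<phi> (kolm_transport t x + y) * kolm_prec \<sigma> t y (kolm_transport t (0, axis i 1))))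
      \<partial>lborel)"
    unfolding D_def kolm_prec_transport_expand[where v = v] by (simp add: sum_distrib_left distrib_left mult_ac)
  also have "\<dots> = (\<Sum>i\<in>UNIV. fst v $ i * D (axis i 1, 0) + snd v $ i * D (0, axis i 1))"
    unfolding D_def by (subst Bochner_Integration.integral_sum) (simp_all add: int)
  finally have D_v: "D v = (\<Sum>i\<in>UNIV. fst v $ i * D (axis i 1, 0) + snd v $ i * D (0, axis i 1))" .
  have units: "(fst x + s *\<^sub>R axis i 1, snd x) = x + s *\<^sub>R (axis i 1, 0)"
    "(fst x, snd x + s *\<^sub>R axis i 1) = x + s *\<^sub>R (0, axis i 1)" for s i
    by (simp_all add: prod_eq_iff)
  show ?thesis
    unfolding units deriv_eq D_v by (simp add: sum_divide_distrib add_divide_distrib)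
qed

lemma kolm_sg_log_deriv_le_entropy:
  fixes f :: "(real^'d::finite) \<times> (real^'d) \<Rightarrow> real"
  assumes "0 < \<sigma>" "0 < t" and [measurable]: "f \<in> borel_measurable borel"
    and nonneg: "\<And>z. 0 \<le> f z" and le: "\<And>z. f z \<le> B" and pos: "0 < kolm_sg \<sigma> t f x"
  shows "kolm_sg \<sigma> t f x * (deriv (\<lambda>r. ln (kolm_sg \<sigma> t f (x + r *\<^sub>R v))) 0 - kolm_energy \<sigma> t (kolm_transport t v))
    \<le> kolm_sg \<sigma> t (\<lambda>z. f z * ln (f z)) x - kolm_sg \<sigma> t f x * ln (kolm_sg \<sigma> t f x)"
proof -
  define F where "F y = f (kolm_transport t x + y)" for y
  define Z where "Z y = kolm_prec \<sigma> t y (kolm_transport t v)" for y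
  define G where "G = kolm_sg \<sigma> t f x"
  have bound: "\<bar>f z\<bar> \<le> B" for z
    using nonneg[of z] le[of z] by simp
  have G: "G = (\<integral>y. kolm_kernel \<sigma> t y * F y \<partial>lborel)"
    unfolding G_def F_def by (rule kolm_sg_eq_integral[OF assms(1-3) bound])
  have "kolm_sg \<sigma> t (\<lambda>z. f z * ln (f z)) x = (\<integral>y. kolm_kernel \<sigma> t y * (F y * ln (F y)) \<partial>lborel)"
    unfolding F_def
  proof (rule kolm_sg_eq_integral[OF assms(1,2)])
    show "\<bar>f z * ln (f z)\<bar> \<le> B\<^sup>2 + 1" for z
      using abs_mult_ln_le[OF nonneg[of z]] power_mono[OF le nonneg, of z 2] by simp
  qed simp
  moreover have "(\<integral>y. kolm_kernel \<sigma> t y * F y * Z y \<partial>lborel)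
      \<le> (\<integral>y. kolm_kernel \<sigma> t y * (F y * ln (F y)) \<partial>lborel) - G * ln G
        + G * ln (\<integral>y. kolm_kernel \<sigma> t y * exp (Z y) \<partial>lborel)"
    unfolding G
  proof (rule weighted_entropy_duality)
    show "integrable lborel (\<lambda>y. kolm_kernel \<sigma> t y * exp (Z y))"
      "integrable lborel (\<lambda>y. kolm_kernel \<sigma> t y * exp (- Z y))"
      using kolm_kernel_exp_moment(1)[OF assms(1,2), of 1] kolm_kernel_exp_moment(1)[OF assms(1,2), of "- 1"]
      unfolding Z_def by simp_all
    show "0 < (\<integral>y. kolm_kernel \<sigma> t y * F y \<partial>lborel)"
      using pos unfolding G[unfolded G_def] .
  qed (use assms(1,2) nonneg le integrable_kolm_kernel in \<open>simp_all add: kolm_density_nonneg F_def Z_def\<close>)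
  moreover have "(\<integral>y. kolm_kernel \<sigma> t y * exp (Z y) \<partial>lborel) = exp (kolm_energy \<sigma> t (kolm_transport t v))"
    unfolding Z_def by (rule kolm_kernel_exp_moment(2)[OF assms(1,2)])
  moreover have "deriv (\<lambda>r. ln (kolm_sg \<sigma> t f (x + r *\<^sub>R v))) 0 = (\<integral>y. kolm_kernel \<sigma> t y * F y * Z y \<partial>lborel) / G"
    unfolding F_def Z_def G_def by (rule kolm_sg_log_deriv[OF assms(1-3) bound pos])
  ultimately show ?thesis
    using pos unfolding G_def[symmetric] by (simp add: right_diff_distrib)
qed

text \<open>The direction \<open>(a, e)\<close> maximises \<open>a u + e v - \<langle>w, \<Sigma>\<inverse> w\<rangle> / 2\<close>, where \<open>w = (a, e + t a)\<close>.\<close>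
lemma kolm_prec2_optimal_direction:
  fixes u v :: real
  assumes "0 < \<sigma>" "0 < t"
  defines "a \<equiv> \<sigma>\<^sup>2 * t * (u - t / 2 * v)" and "e \<equiv> \<sigma>\<^sup>2 * t * (- t / 2 * u + t\<^sup>2 / 3 * v)"
  shows "a * u + e * v - kolm_prec2 \<sigma> t a (e + t * a) a (e + t * a) / 2
    = \<sigma>\<^sup>2 * t / 2 * ((u - t / 2 * v)\<^sup>2 + t\<^sup>2 / 12 * v\<^sup>2)"
  unfolding a_def e_def kolm_prec2_def kolm_det_eq kolm_var_b_def kolm_var_c_def kolm_cov_def
  using assms(1,2) by (simp add: field_simps power2_eq_square) (simp add: eval_nat_numeral algebra_simps)

lemma kolm_sg_log_gradient_le_entropy:
  fixes f :: "(real^'d::finite) \<times> (real^'d) \<Rightarrow> real"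
  assumes "0 < \<sigma>" "0 < t" and [measurable]: "f \<in> borel_measurable borel"
    and "\<And>z. 0 \<le> f z" and "\<And>z. f z \<le> B" and pos: "0 < kolm_sg \<sigma> t f (p, \<xi>)"
  shows "(\<Sum>i\<in>UNIV.
            (deriv (\<lambda>s. ln (kolm_sg \<sigma> t f (p + s *\<^sub>R axis i 1, \<xi>))) 0
             - t / 2 * deriv (\<lambda>s. ln (kolm_sg \<sigma> t f (p, \<xi> + s *\<^sub>R axis i 1))) 0)\<^sup>2
          + t\<^sup>2 / 12 * (deriv (\<lambda>s. ln (kolm_sg \<sigma> t f (p, \<xi> + s *\<^sub>R axis i 1))) 0)\<^sup>2)
         \<le> 2 / (\<sigma>\<^sup>2 * t * kolm_sg \<sigma> t f (p, \<xi>))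
           * (kolm_sg \<sigma> t (\<lambda>x. f x * ln (f x)) (p, \<xi>)
              - kolm_sg \<sigma> t f (p, \<xi>) * ln (kolm_sg \<sigma> t f (p, \<xi>)))"
proof -
  define u where "u i = deriv (\<lambda>s. ln (kolm_sg \<sigma> t f (p + s *\<^sub>R axis i 1, \<xi>))) 0" for i
  define v where "v i = deriv (\<lambda>s. ln (kolm_sg \<sigma> t f (p, \<xi> + s *\<^sub>R axis i 1))) 0" for i
  define G where "G = kolm_sg \<sigma> t f (p, \<xi>)"
  define S where "S = (\<Sum>i\<in>UNIV. (u i - t / 2 * v i)\<^sup>2 + t\<^sup>2 / 12 * (v i)\<^sup>2)"
  define a where "a = (\<chi> i. \<sigma>\<^sup>2 * t * (u i - t / 2 * v i))"
  define e where "e = (\<chi> i. \<sigma>\<^sup>2 * t * (- t / 2 * u i + t\<^sup>2 / 3 * v i))"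
  have bound: "\<bar>f z\<bar> \<le> B" for z
    using assms(4,5)[of z] by simp
  have deriv_ae: "deriv (\<lambda>r. ln (kolm_sg \<sigma> t f ((p, \<xi>) + r *\<^sub>R (a, e)))) 0
      = (\<Sum>i\<in>UNIV. a $ i * u i + e $ i * v i)"
    using kolm_sg_log_deriv_eq_sum[OF assms(1-3) bound pos, of "(a, e)"] by (simp add: u_def v_def)
  have energy: "kolm_energy \<sigma> t (kolm_transport t (a, e))
      = (\<Sum>i\<in>UNIV. kolm_prec2 \<sigma> t (a $ i) (e $ i + t * a $ i) (a $ i) (e $ i + t * a $ i) / 2)"
    by (simp add: kolm_energy_def kolm_prec_def kolm_transport_def sum_divide_distrib)
  have optimal: "a $ i * u i + e $ i * v i
      - kolm_prec2 \<sigma> t (a $ i) (e $ i + t * a $ i) (a $ i) (e $ i + t * a $ i) / 2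
      = \<sigma>\<^sup>2 * t / 2 * ((u i - t / 2 * v i)\<^sup>2 + t\<^sup>2 / 12 * (v i)\<^sup>2)" for i
    unfolding a_def e_def vec_lambda_beta by (rule kolm_prec2_optimal_direction[OF assms(1,2)])
  have gap: "deriv (\<lambda>r. ln (kolm_sg \<sigma> t f ((p, \<xi>) + r *\<^sub>R (a, e)))) 0
      - kolm_energy \<sigma> t (kolm_transport t (a, e)) = \<sigma>\<^sup>2 * t / 2 * S"
    unfolding S_def deriv_ae energy sum_subtractf[symmetric] sum_distrib_left
    by (rule sum.cong[OF refl optimal])
  have "G * (deriv (\<lambda>r. ln (kolm_sg \<sigma> t f ((p, \<xi>) + r *\<^sub>R (a, e)))) 0
      - kolm_energy \<sigma> t (kolm_transport t (a, e)))
    \<le> kolm_sg \<sigma> t (\<lambda>x. f x * ln (f x)) (p, \<xi>) - G * ln G"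
    unfolding G_def by (rule kolm_sg_log_deriv_le_entropy[OF assms])
  then have "G * (\<sigma>\<^sup>2 * t / 2 * S) \<le> kolm_sg \<sigma> t (\<lambda>x. f x * ln (f x)) (p, \<xi>) - G * ln G"
    unfolding gap .
  then have "S \<le> 2 / (\<sigma>\<^sup>2 * t * G) * (kolm_sg \<sigma> t (\<lambda>x. f x * ln (f x)) (p, \<xi>) - G * ln G)"
    using pos assms(1,2) unfolding G_def by (simp add: field_simps)
  then show ?thesis
    unfolding S_def u_def v_def G_def .
qed

theorem proposition2p8:
  fixes \<sigma> t :: real
    and f :: "(real^'d::finite) \<times> (real^'d) \<Rightarrow> real"
    and p \<xi> :: "real^'d"
  assumes sigma_pos: "\<sigma> > 0"
    and t_pos: "t > 0"
    and f_C1: "\<exists>f'. (\<forall>x. (f has_derivative blinfun_apply (f' x)) (at x)) \<and> continuous_on UNIV f'"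
    and f_nonneg: "\<And>x. 0 \<le> f x"
    and f_bounded: "bounded (range f)"
  shows "(\<Sum>i\<in>UNIV.
            (deriv (\<lambda>s. ln (kolm_sg \<sigma> t f (p + s *\<^sub>R axis i 1, \<xi>))) 0
             - t / 2 * deriv (\<lambda>s. ln (kolm_sg \<sigma> t f (p, \<xi> + s *\<^sub>R axis i 1))) 0)\<^sup>2
          + t\<^sup>2 / 12 * (deriv (\<lambda>s. ln (kolm_sg \<sigma> t f (p, \<xi> + s *\<^sub>R axis i 1))) 0)\<^sup>2)
         \<le> 2 / (\<sigma>\<^sup>2 * t * kolm_sg \<sigma> t f (p, \<xi>))
           * (kolm_sg \<sigma> t (\<lambda>x. f x * ln (f x)) (p, \<xi>)
              - kolm_sg \<sigma> t f (p, \<xi>) * ln (kolm_sg \<sigma> t f (p, \<xi>)))"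
proof -
  have "continuous_on UNIV f"
    using f_C1 has_derivative_continuous continuous_at_imp_continuous_on by blast
  then have f_meas: "f \<in> borel_measurable borel"
    by (rule borel_measurable_continuous_onI)
  obtain B where "\<And>x. f x \<le> B"
    using f_bounded unfolding bounded_real by (meson abs_le_iff rangeI)
  note regular = sigma_pos t_pos f_meas f_nonneg this
  show ?thesis
  proof (cases "kolm_sg \<sigma> t f (p, \<xi>) = 0")
    case True
    text \<open>Then \<open>P\<^sub>t f\<close> vanishes identically, and both sides are \<open>0\<close> since \<open>ln 0 = 0\<close> and \<open>x / 0 = 0\<close>.\<close>
    then have "kolm_sg \<sigma> t f z = 0" for z
      by (rule kolm_sg_eq_0_everywhere[OF regular])
    then show ?thesis
      by simp
  next
    case False
    then have "0 < kolm_sg \<sigma> t f (p, \<xi>)"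
      using kolm_sg_nonneg[OF sigma_pos t_pos f_nonneg] by (simp add: order_less_le)
    then show ?thesis
      by (rule kolm_sg_log_gradient_le_entropy[OF regular])
  qed
qed

end
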